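(* Let the setting in the context hold, let $\beta_i\in(0,1)$ for each $i\in\mathcal{N}$, and suppose each agent uses the Wasserstein radius $\epsilon_i=\epsilon_i(K_i,\beta_i)$. Let $x_K^*$ be a DRNE of the game $\forall i:\ \min_{x_i\in X_i}\max_{\mathbb{Q}_i\in\mathbb{B}_{\epsilon_i(K_i,\beta_i)}(\hat{\mathbb{P}}_{K_i})}\mathbb{E}_{\mathbb{Q}_i}[h_i(x_i,x_{-i},\xi_i)]$ computed from the drawn multisample $\xi_K=\{\xi_{K_i}\}_{i=1}^N$. Then $$\mathbb{P}^K\Big\{\mathbb{E}_{\mathbb{P}_i}[h_i(x_K^*,\xi_i)]\le\sup_{\mathbb{Q}_i\in\mathbb{B}_{\epsilon_i(K_i,\beta_i)}(\hat{\mathbb{P}}_{K_i})}\mathbb{E}_{\mathbb{Q}_i}[h_i(x_K^*,\xi_i)]\ \ \forall i\in\mathcal{N}\Big\}\ \ge\ 1-\sum_{i\in\mathcal{N}}\beta_i,$$ where $\mathbb{P}^K=\prod_{i=1}^N\mathbb{P}_i^{K_i}$.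
   Context: Agents $i\in\mathcal{N}=\{1,\dots,N\}$ choose $x_i\in X_i\subseteq\mathbb{R}^n$, $X=\prod_iX_i$, $x=\mathrm{col}((x_i)_i)$, $x_{-i}$ the others' decisions; $h_i:\mathbb{R}^{nN}\times\Xi_i\to\mathbb{R}$ is agent $i$'s cost, with uncertainty $\xi_i\in\Xi_i\subseteq\mathbb{R}^p$, $p\neq 2$, distributed according to an unknown true distribution $\mathbb{P}_i$. $\|\cdot\|$ is the Euclidean norm; $\mathcal{M}(\Xi_i)$ is the set of distributions on $\Xi_i$ with finite first moment; $d_W(\mathbb{Q}_1,\mathbb{Q}_2)=\inf_\Pi\int\|\xi_1-\xi_2\|\Pi(d\xi_1,d\xi_2)$ over couplings $\Pi$ of $\mathbb{Q}_1,\mathbb{Q}_2$. Each agent $i$ draws $K_i\ge1$ i.i.d. samples $\xi_{K_i}=\{\xi_i^{(k)}\}_{k=1}^{K_i}$ from $\mathbb{P}_i$ (independently across agents), with empirical distribution $\hat{\mathbb{P}}_{K_i}=\frac1{K_i}\sum_k\delta_{\xi_i^{(k)}}$ and $\mathbb{B}_{\epsilon}(\hat{\mathbb{P}}_{K_i})=\{\mathbb{Q}\in\mathcal{M}(\Xi_i):d_W(\hat{\mathbb{P}}_{K_i},\mathbb{Q})\le\epsilon\}$. A DRNE is $x^*_K\in X$ with $x^*_{i,K}\in\arg\min_{x_i\in X_i}\max_{\mathbb{Q}_i\in\mathbb{B}_{\epsilon_i}(\hat{\mathbb{P}}_{K_i})}\mathbb{E}_{\mathbb{Q}_i}[h_i(x_i,x^*_{-i,K},\xi_i)]$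 for all $i$. Light-tail assumption: for each $i$, the true distribution $\mathbb{P}_i$ (and every distribution considered in agent $i$'s ambiguity set) belongs to $\mathcal{M}(\Xi_i)$ and there is $a_i>1$ with $A_i:=\mathbb{E}[\exp(\|\xi_i\|^{a_i})]<\infty$. Under this assumption there are constants $c_i,b_i>0$ depending only on $a_i,A_i,p$ (Fournier–Guillin) such that $\mathbb{P}_i^{K_i}\{\mathbb{P}_i\in\mathbb{B}_{\epsilon}(\hat{\mathbb{P}}_{K_i})\}\ge 1-c_i\exp(-b_iK_i\epsilon^{\max\{p,2\}})$ if $\epsilon\le1$ and $\ge 1-c_i\exp(-b_iK_i\epsilon^{a_i})$ if $\epsilon>1$. The radius $\epsilon_i(K_i,\beta_i)$ is defined as $\big(\ln(c_i/\beta_i)/(b_iK_i)\big)^{1/\max\{p,2\}}$ if $K_i\ge\ln(c_i/\beta_i)/b_i$ and $\big(\ln(c_i/\beta_i)/(b_iK_i)\big)^{1/a_i}$ otherwise; it satisfies $\mathbb{P}_i^{K_i}\{d_W(\mathbb{P}_i,\hat{\mathbb{P}}_{K_i})\le\epsilon_i(K_i,\beta_i)\}\ge1-\beta_i$. *)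

theory Defs
  imports "HOL-Probability.Probability"
begin

definition distrs :: "'b::euclidean_space set \<Rightarrow> 'b measure set" where
  "distrs Xi = {Q. prob_space Q \<and> sets Q = sets borel \<and> Xi \<in> sets Q \<and> emeasure Q Xi = 1
                  \<and> integrable Q norm}"

definition couplings :: "'b::euclidean_space measure \<Rightarrow> 'b measure \<Rightarrow> ('b \<times> 'b) measure set" where
  "couplings Q1 Q2 = {Pi. sets Pi = sets (borel \<Otimes>\<^sub>M borel)
                          \<and> distr Pi borel fst = Q1 \<and> distr Pi borel snd = Q2}"

definition wdist :: "'b::euclidean_space measure \<Rightarrow> 'b measure \<Rightarrow> ennreal" where
  "wdist Q1 Q2 = (INF Pi\<in>couplings Q1 Q2. \<integral>\<^sup>+ z. ennreal (norm (fst z - snd z)) \<partial>Pi)"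

definition wball :: "'b::euclidean_space set \<Rightarrow> real \<Rightarrow> 'b measure \<Rightarrow> 'b measure set" where
  "wball Xi eps Phat = {Q \<in> distrs Xi. wdist Phat Q \<le> ennreal eps}"

definition empirical :: "nat \<Rightarrow> (nat \<Rightarrow> 'b::euclidean_space) \<Rightarrow> 'b measure" where
  "empirical K s = distr (uniform_count_measure {..<K}) borel s"

definition worst_exp :: "'b::euclidean_space set \<Rightarrow> real \<Rightarrow> 'b measure \<Rightarrow> ('b \<Rightarrow> real) \<Rightarrow> ereal" where
  "worst_exp Xi eps Phat f = (SUP Q\<in>wball Xi eps Phat. ereal (\<integral>\<xi>. f \<xi> \<partial>Q))"

text \<open>The radius eps_i(K_i, beta_i); p is the dimension of the uncertainty.\<close>
definition radius :: "real \<Rightarrow> real \<Rightarrow> nat \<Rightarrow> real \<Rightarrow> nat \<Rightarrow> real \<Rightarrow> real" where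
  "radius c b p a K beta =
     (if real K \<ge> ln (c / beta) / b
      then (ln (c / beta) / (b * real K)) powr (1 / real (max p 2))
      else (ln (c / beta) / (b * real K)) powr (1 / a))"

definition is_DRNE ::
  "nat \<Rightarrow> (nat \<Rightarrow> 'a set) \<Rightarrow> (nat \<Rightarrow> 'b::euclidean_space set) \<Rightarrow> (nat \<Rightarrow> real)
   \<Rightarrow> (nat \<Rightarrow> 'b measure) \<Rightarrow> (nat \<Rightarrow> (nat \<Rightarrow> 'a) \<Rightarrow> 'b \<Rightarrow> real) \<Rightarrow> (nat \<Rightarrow> 'a) \<Rightarrow> bool" where
  "is_DRNE N X Xi eps Phat h x \<longleftrightarrow>
     x \<in> PiE {..<N} X \<and>
     (\<forall>i<N. \<forall>y\<in>X i. worst_exp (Xi i) (eps i) (Phat i) (h i x)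
                     \<le> worst_exp (Xi i) (eps i) (Phat i) (h i (x(i := y))))"

definition multisample :: "nat \<Rightarrow> (nat \<Rightarrow> nat) \<Rightarrow> (nat \<Rightarrow> 'b measure) \<Rightarrow> (nat \<Rightarrow> nat \<Rightarrow> 'b) measure" where
  "multisample N K P = (\<Pi>\<^sub>M i\<in>{..<N}. \<Pi>\<^sub>M k\<in>{..<K i}. P i)"

end

theory Submission
  imports Defs
begin

text \<open>By the choice of the radius, the Fournier--Guillin bound places the true distribution
  \<open>P i\<close> in the Wasserstein ball around its empirical distribution with probability at least
  \<open>1 - beta i\<close>. On that event the worst-case expectation over the ball dominates the true
  expectation, whatever the decision \<open>xstar s\<close> is, and a union bound over the agents gives
  the claim.\<close>

lemma wball_mono: "e1 \<le> e2 \<Longrightarrow> wball Xi e1 Q \<subseteq> wball Xi e2 Q"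
  unfolding wball_def using ennreal_leI order_trans by blast

lemma wball_0_eq_INT: "wball Xi 0 Q = (\<Inter>j. wball Xi (1 / Suc j) Q)"
proof
  show "wball Xi 0 Q \<subseteq> (\<Inter>j. wball Xi (1 / Suc j) Q)"
    using wball_mono[of 0 "1 / Suc _" Xi Q] by (simp add: INT_greatest)
  show "(\<Inter>j. wball Xi (1 / Suc j) Q) \<subseteq> wball Xi 0 Q"
  proof
    fix R assume R: "R \<in> (\<Inter>j. wball Xi (1 / Suc j) Q)"
    have "wdist Q R \<le> 0"
    proof (rule ennreal_le_epsilon)
      fix e :: real assume "0 < e"
      then obtain j :: nat where j: "inverse (real (Suc j)) < e"
        using reals_Archimedean by blast
      have "wdist Q R \<le> ennreal (1 / Suc j)"
        using R unfolding wball_def by blast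
      also have "\<dots> \<le> ennreal e"
        using j by (intro ennreal_leI) (simp add: field_simps)
      finally show "wdist Q R \<le> 0 + ennreal e" by simp
    qed
    then show "R \<in> wball Xi 0 Q"
      using R unfolding wball_def by auto
  qed
qed

lemma worst_exp_ge_of_mem_wball:
  "Q \<in> wball Xi eps Phat \<Longrightarrow> ereal (\<integral>\<xi>. f \<xi> \<partial>Q) \<le> worst_exp Xi eps Phat f"
  unfolding worst_exp_def by (rule SUP_upper)

lemma radius_nonneg: "0 \<le> radius c b p a n beta"
  unfolding radius_def by auto

lemma radius_rate:
  fixes p :: nat
  assumes "0 < beta" "beta < c" "0 < b" "0 < n" "1 < a"
  defines "r \<equiv> radius c b p a n beta"
  shows "0 < r"
    and "c * exp (- b * real n * (if r \<le> 1 then r powr real (max p 2) else r powr a)) = beta"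
proof -
  define L where "L = ln (c / beta) / (b * real n)"
  have "0 < ln (c / beta)"
    using assms by simp
  then have L_pos: "0 < L"
    unfolding L_def using assms by simp
  have rate: "c * exp (- b * real n * L) = beta"
  proof -
    have "- b * real n * L = ln (beta / c)"
      unfolding L_def using assms by (simp add: ln_div)
    then show ?thesis
      using assms by simp
  qed
  have "0 < r \<and> (if r \<le> 1 then r powr real (max p 2) else r powr a) = L"
  proof (cases "real n \<ge> ln (c / beta) / b")
    case True
    then have "L \<le> 1"
      unfolding L_def using assms by (simp add: field_simps)
    moreover have "r = L powr (1 / real (max p 2))"
      unfolding r_def radius_def L_def using True by simp
    ultimately show ?thesis
      using L_pos by (simp add: powr_le1 powr_powr)
  next
    case False
    then have "1 < L"
      unfolding L_def using assms by (simp add: field_simps)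
    then have "1 < L powr (1 / a)"
      using assms powr_less_mono2[of "1 / a" 1 L] by simp
    moreover have "r = L powr (1 / a)"
      unfolding r_def radius_def L_def using False by simp
    ultimately show ?thesis
      using L_pos assms by (simp add: powr_powr)
  qed
  then show "0 < r" and "c * exp (- b * real n * (if r \<le> 1 then r powr real (max p 2) else r powr a)) = beta"
    using rate by simp_all
qed

lemma sets_of_measure_pos: "0 < measure M A \<Longrightarrow> A \<in> sets M"
  using measure_notin_sets by force

lemma (in finite_measure) measure_INT_decseq_ge:
  assumes "range A \<subseteq> sets M" "decseq A" "\<And>j. q \<le> measure M (A j)"
  shows "q \<le> measure M (\<Inter>j. A j)"
  using LIMSEQ_le_const[OF finite_Lim_measure_decseq[OF assms(1,2)]] assms(3) by blast

lemma (in prob_space) prob_all_ge_1_minus_sum: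
  assumes "finite I" "\<And>i. i \<in> I \<Longrightarrow> A i \<in> events" "\<And>i. i \<in> I \<Longrightarrow> 1 - beta i \<le> prob (A i)"
  shows "1 - sum beta I \<le> prob {x \<in> space M. \<forall>i\<in>I. x \<in> A i}"
proof -
  have "space M - {x \<in> space M. \<forall>i\<in>I. x \<in> A i} = (\<Union>i\<in>I. space M - A i)"
    by auto
  moreover have "prob (\<Union>i\<in>I. space M - A i) \<le> (\<Sum>i\<in>I. prob (space M - A i))"
    using assms(2) by (intro finite_measure_subadditive_finite[OF assms(1)]) auto
  moreover have "(\<Sum>i\<in>I. prob (space M - A i)) \<le> sum beta I"
  proof (rule sum_mono)
    fix i assume "i \<in> I"
    then show "prob (space M - A i) \<le> beta i"
      using prob_compl assms(2,3) by (metis diff_le_eq add.commute)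
  qed
  moreover have "{x \<in> space M. \<forall>i\<in>I. x \<in> A i} \<in> events"
    using assms(1,2) by (auto intro: sets.sets_Collect_finite_All)
  ultimately show ?thesis
    using prob_compl by fastforce
qed

lemma PiM_component_preimage:
  assumes "\<And>i. i \<in> I \<Longrightarrow> prob_space (M i)" "i \<in> I" "A \<in> sets (M i)"
  shows "(\<lambda>\<omega>. \<omega> i) -` A \<inter> space (\<Pi>\<^sub>M i\<in>I. M i) \<in> sets (\<Pi>\<^sub>M i\<in>I. M i)"
    and "measure (\<Pi>\<^sub>M i\<in>I. M i) ((\<lambda>\<omega>. \<omega> i) -` A \<inter> space (\<Pi>\<^sub>M i\<in>I. M i)) = measure (M i) A"
proof -
  have component: "(\<lambda>\<omega>. \<omega> i) \<in> measurable (\<Pi>\<^sub>M i\<in>I. M i) (M i)"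
    using assms(2) by (rule measurable_component_singleton)
  then show "(\<lambda>\<omega>. \<omega> i) -` A \<inter> space (\<Pi>\<^sub>M i\<in>I. M i) \<in> sets (\<Pi>\<^sub>M i\<in>I. M i)"
    using assms(3) by (rule measurable_sets)
  show "measure (\<Pi>\<^sub>M i\<in>I. M i) ((\<lambda>\<omega>. \<omega> i) -` A \<inter> space (\<Pi>\<^sub>M i\<in>I. M i)) = measure (M i) A"
    using measure_distr[OF component assms(3)] distr_PiM_component[of I M i, OF assms(1,2)] by simp
qed

lemma prob_wball_radius_ge:
  fixes P :: "'b::euclidean_space measure" and n :: nat and Xi :: "'b set"
  defines "M \<equiv> \<Pi>\<^sub>M k\<in>{..<n}. P"
  defines "G \<equiv> \<lambda>e. {s \<in> space M. P \<in> wball Xi e (empirical n s)}"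
  assumes "prob_space P"
    and FG: "\<And>e. 0 < e \<Longrightarrow> 1 - c * exp (- b * real n * (if e \<le> 1 then e powr real (max p 2) else e powr a))
                          \<le> measure M (G e)"
    and "1 \<le> n" "0 < b" "1 < a" "0 < beta" "beta < 1"
  shows "G (radius c b p a n beta) \<in> sets M \<and> 1 - beta \<le> measure M (G (radius c b p a n beta))"
proof -
  interpret M: prob_space M
    unfolding M_def using assms by (intro prob_space_PiM) auto
  define r where "r = radius c b p a n beta"
  have "1 - beta \<le> measure M (G r)"
  proof (cases "beta < c")
    case True
    have "0 < r" "c * exp (- b * real n * (if r \<le> 1 then r powr real (max p 2) else r powr a)) = beta"
      using radius_rate[of beta c b n a p] True assms unfolding r_def by auto
    then show ?thesis
      using FG[of r] by simp
  next
    case False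
    text \<open>Then the radius formula takes a \<open>powr\<close> of a nonpositive number, so the radius is
      \<open>0\<close> or a junk value; but since \<open>c \<le> beta\<close>, the bound holds at every radius \<open>\<ge> 0\<close>.\<close>
    have bound: "1 - beta \<le> measure M (G e)" if "0 < e" for e
    proof -
      define x where "x = exp (- b * real n * (if e \<le> 1 then e powr real (max p 2) else e powr a))"
      have "0 < x" "x \<le> 1"
        unfolding x_def using assms by simp_all
      then have "c * x \<le> beta"
        using False \<open>0 < beta\<close> by (smt (verit) mult_left_le mult_neg_pos)
      then show ?thesis
        using FG[OF \<open>0 < e\<close>] unfolding x_def by linarith
    qed
    show ?thesis
    proof (cases "r = 0")
      case False
      then have "0 < r"
        using radius_nonneg[of c b p a n beta] unfolding r_def by linarith
      then show ?thesis
        by (rule bound)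
    next
      case True
      have "G 0 = (\<Inter>j. G (1 / Suc j))"
        unfolding G_def using wball_0_eq_INT[of Xi] by auto
      moreover have "range (\<lambda>j. G (1 / Suc j)) \<subseteq> sets M"
      proof -
        have "0 < measure M (G (1 / Suc j))" for j :: nat
          using bound[of "1 / Suc j"] \<open>beta < 1\<close> by simp
        then show ?thesis
          by (auto intro: sets_of_measure_pos)
      qed
      moreover have "decseq (\<lambda>j. G (1 / Suc j))"
      proof (rule decseq_SucI)
        fix j :: nat
        have "1 / real (Suc (Suc j)) \<le> 1 / real (Suc j)"
          by (simp add: frac_le)
        then show "G (1 / Suc (Suc j)) \<subseteq> G (1 / Suc j)"
          unfolding G_def using wball_mono by blast
      qed
      ultimately show ?thesis
        using M.measure_INT_decseq_ge bound True by simp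
    qed
  qed
  moreover from this have "G r \<in> sets M"
    using \<open>beta < 1\<close> by (intro sets_of_measure_pos) simp
  ultimately show ?thesis
    unfolding r_def by simp
qed

theorem lemma4:
  fixes N :: nat
    and X :: "nat \<Rightarrow> 'a::euclidean_space set"
    and Xi :: "nat \<Rightarrow> 'b::euclidean_space set"
    and P :: "nat \<Rightarrow> 'b measure"
    and h :: "nat \<Rightarrow> (nat \<Rightarrow> 'a) \<Rightarrow> 'b \<Rightarrow> real"
    and K :: "nat \<Rightarrow> nat"
    and beta a c b :: "nat \<Rightarrow> real"
    and A :: "nat \<Rightarrow> real"
    and xstar :: "(nat \<Rightarrow> nat \<Rightarrow> 'b) \<Rightarrow> nat \<Rightarrow> 'a"
  assumes p_ne_2: "DIM('b) \<noteq> 2"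
    and Xi_borel: "\<forall>i<N. Xi i \<in> sets borel"
    and P_distr: "\<forall>i<N. P i \<in> distrs (Xi i)"
    and h_meas: "\<forall>i<N. \<forall>x. h i x \<in> borel_measurable borel"
    and light_tail: "\<forall>i<N. a i > 1 \<and>
          (\<integral>\<^sup>+ \<xi>. ennreal (exp (norm \<xi> powr a i)) \<partial>P i) = ennreal (A i)"
    and const_pos: "\<forall>i<N. c i > 0 \<and> b i > 0"
    and fournier_guillin: "\<forall>i<N. \<forall>n::nat. n \<ge> 1 \<longrightarrow> (\<forall>\<epsilon>>0.
          measure (\<Pi>\<^sub>M k\<in>{..<n}. P i)
            {s \<in> space (\<Pi>\<^sub>M k\<in>{..<n}. P i). P i \<in> wball (Xi i) \<epsilon> (empirical n s)}
          \<ge> 1 - c i * exp (- b i * real n *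
                (if \<epsilon> \<le> 1 then \<epsilon> powr real (max DIM('b) 2) else \<epsilon> powr a i)))"
    and K_pos: "\<forall>i<N. K i \<ge> 1"
    and beta_range: "\<forall>i<N. 0 < beta i \<and> beta i < 1"
    and DRNE: "\<forall>s\<in>space (multisample N K P).
          is_DRNE N X Xi (\<lambda>i. radius (c i) (b i) DIM('b) (a i) (K i) (beta i))
                  (\<lambda>i. empirical (K i) (s i)) h (xstar s)"
    and event_meas: "{s \<in> space (multisample N K P). \<forall>i<N.
          ereal (\<integral>\<xi>. h i (xstar s) \<xi> \<partial>P i)
          \<le> worst_exp (Xi i) (radius (c i) (b i) DIM('b) (a i) (K i) (beta i))
                       (empirical (K i) (s i)) (h i (xstar s))} \<in> sets (multisample N K P)"
  shows "measure (multisample N K P)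
           {s \<in> space (multisample N K P). \<forall>i<N.
              ereal (\<integral>\<xi>. h i (xstar s) \<xi> \<partial>P i)
              \<le> worst_exp (Xi i) (radius (c i) (b i) DIM('b) (a i) (K i) (beta i))
                           (empirical (K i) (s i)) (h i (xstar s))}
         \<ge> 1 - (\<Sum>i<N. beta i)"
proof -
  define r where "r i = radius (c i) (b i) DIM('b) (a i) (K i) (beta i)" for i
  define M where "M i = (\<Pi>\<^sub>M k\<in>{..<K i}. P i)" for i
  define G where "G i = {t \<in> space (M i). P i \<in> wball (Xi i) (r i) (empirical (K i) t)}" for i
  define H where "H i = (\<lambda>s. s i) -` G i \<inter> space (multisample N K P)" for i
  have P_prob: "prob_space (P i)" if "i < N" for i
    using P_distr that unfolding distrs_def by blast
  have M_prob: "prob_space (M i)" if "i < N" for i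
    unfolding M_def using P_prob[OF that] by (intro prob_space_PiM) auto
  have multisample_eq: "multisample N K P = (\<Pi>\<^sub>M i\<in>{..<N}. M i)"
    unfolding multisample_def M_def ..
  interpret prob_space "multisample N K P"
    unfolding multisample_eq using M_prob by (intro prob_space_PiM) auto
  have G: "G i \<in> sets (M i) \<and> 1 - beta i \<le> measure (M i) (G i)" if "i < N" for i
  proof -
    have "1 \<le> K i" "0 < b i" "1 < a i" "0 < beta i" "beta i < 1"
      using K_pos const_pos light_tail beta_range that by auto
    then show ?thesis
      unfolding G_def M_def r_def
      by (intro prob_wball_radius_ge[OF P_prob[OF that] fournier_guillin[rule_format, OF that \<open>1 \<le> K i\<close>]])
  qed
  have H: "H i \<in> events \<and> 1 - beta i \<le> prob (H i)" if "i < N" for i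
    using PiM_component_preimage[of "{..<N}" M i "G i"] M_prob G[OF that] that
    unfolding H_def multisample_eq by simp
  have dominated: "ereal (\<integral>\<xi>. h i (xstar s) \<xi> \<partial>P i)
      \<le> worst_exp (Xi i) (r i) (empirical (K i) (s i)) (h i (xstar s))" if "s \<in> H i" for s i
    using that unfolding H_def G_def by (auto intro: worst_exp_ge_of_mem_wball)
  have "1 - (\<Sum>i<N. beta i) \<le> prob {s \<in> space (multisample N K P). \<forall>i\<in>{..<N}. s \<in> H i}"
    using H by (intro prob_all_ge_1_minus_sum) auto
  then show ?thesis
    by (rule order_trans[OF _ finite_measure_mono[OF _ event_meas]])
      (auto simp: r_def[symmetric] intro: dominated)
qed

end
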